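(* Let $A\in\mathbb{R}^{m\times n}$ have no zero row, with rows $a_1^T,\dots,a_m^T$, let ${\bf u}=(\mu_1,\dots,\mu_m)\in\mathbb{R}^m$, $P_k(\mu_k)=I-\mu_k a_ka_k^T/\|a_k\|_2^2$, $Q_i({\bf u}_i)=P_m(\mu_m)\cdots P_{i+1}(\mu_{i+1})$ for $1\le i\le m-1$, $Q_m({\bf u}_m)=I$, and $A_{\mathcal S}({\bf u})=(Q_1({\bf u}_1)a_1,\dots,Q_m({\bf u}_m)a_m)^T$. Let $h_{k,l}=a_k^Ta_l/\|a_l\|_2^2$ and, for $1\le i<j\le m$, $$d_{i,j}({\bf u}_i)=\sum_{v=2}^{j-i+1}(-1)^{v-1}\sum_{i=t_1<t_2<\dots<t_v=j}\ \prod_{s=1}^{v-1}\mu_{t_{s+1}}\prod_{s=1}^{v-1}h_{t_s,t_{s+1}},$$ the inner sum being over strictly increasing integer sequences from $i$ to $j$ of length $v$. Define $\Omega({\bf u})=(\omega_{i,j})\in\mathbb{R}^{m\times m}$ by $\omega_{i,j}=d_{i,j}({\bf u}_i)$ if $j>i$, $\omega_{i,i}=1$, and $\omega_{i,j}=0$ if $j<i$. Then $$A_{\mathcal S}({\bf u})=\Omega({\bf u})A.$$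
   Context: ${\bf u}_i=(\mu_{i+1},\dots,\mu_m)$. *)

theory Defs
  imports Complex_Main
begin

text \<open>Matrices are represented as functions nat => nat => real, with 1-based
indices; an m x n matrix A has entries A r c for r in {1..m}, c in {1..n}.\<close>

definition mmul :: "nat \<Rightarrow> (nat \<Rightarrow> nat \<Rightarrow> real) \<Rightarrow> (nat \<Rightarrow> nat \<Rightarrow> real) \<Rightarrow> nat \<Rightarrow> nat \<Rightarrow> real" where
  "mmul p X Y r c = (\<Sum>k = 1..p. X r k * Y k c)"

definition idm :: "nat \<Rightarrow> nat \<Rightarrow> real" where
  "idm r c = (if r = c then 1 else 0)"

definition rownorm2 :: "nat \<Rightarrow> (nat \<Rightarrow> nat \<Rightarrow> real) \<Rightarrow> nat \<Rightarrow> real" where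
  "rownorm2 n A k = (\<Sum>c = 1..n. (A k c)\<^sup>2)"

definition Pmat :: "nat \<Rightarrow> (nat \<Rightarrow> nat \<Rightarrow> real) \<Rightarrow> nat \<Rightarrow> real \<Rightarrow> nat \<Rightarrow> nat \<Rightarrow> real" where
  "Pmat n A k \<mu> r c = idm r c - \<mu> * A k r * A k c / rownorm2 n A k"

text \<open>Qaux j = P_m(mu_m) ... P_{m-j+1}(mu_{m-j+1}) (empty product = I)\<close>
primrec Qaux :: "nat \<Rightarrow> nat \<Rightarrow> (nat \<Rightarrow> nat \<Rightarrow> real) \<Rightarrow> (nat \<Rightarrow> real) \<Rightarrow> nat \<Rightarrow> nat \<Rightarrow> nat \<Rightarrow> real" where
  "Qaux m n A u 0 = idm"
| "Qaux m n A u (Suc j) = mmul n (Qaux m n A u j) (Pmat n A (m - j) (u (m - j)))"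

definition Qmat :: "nat \<Rightarrow> nat \<Rightarrow> (nat \<Rightarrow> nat \<Rightarrow> real) \<Rightarrow> (nat \<Rightarrow> real) \<Rightarrow> nat \<Rightarrow> nat \<Rightarrow> nat \<Rightarrow> real" where
  "Qmat m n A u i = Qaux m n A u (m - i)"

definition AS :: "nat \<Rightarrow> nat \<Rightarrow> (nat \<Rightarrow> nat \<Rightarrow> real) \<Rightarrow> (nat \<Rightarrow> real) \<Rightarrow> nat \<Rightarrow> nat \<Rightarrow> real" where
  "AS m n A u i r = (\<Sum>c = 1..n. Qmat m n A u i r c * A i c)"

definition hcoef :: "nat \<Rightarrow> (nat \<Rightarrow> nat \<Rightarrow> real) \<Rightarrow> nat \<Rightarrow> nat \<Rightarrow> real" where
  "hcoef n A k l = (\<Sum>c = 1..n. A k c * A l c) / rownorm2 n A l"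

definition incseqs :: "nat \<Rightarrow> nat \<Rightarrow> nat \<Rightarrow> nat list set" where
  "incseqs v i j = {ts. length ts = v \<and> sorted_wrt (<) ts \<and> ts ! 0 = i \<and> ts ! (v - 1) = j}"

definition dcoef :: "nat \<Rightarrow> (nat \<Rightarrow> nat \<Rightarrow> real) \<Rightarrow> (nat \<Rightarrow> real) \<Rightarrow> nat \<Rightarrow> nat \<Rightarrow> real" where
  "dcoef n A u i j = (\<Sum>v = 2..j - i + 1. (-1) ^ (v - 1) *
      (\<Sum>ts \<in> incseqs v i j.
         (\<Prod>s < v - 1. u (ts ! (s + 1))) * (\<Prod>s < v - 1. hcoef n A (ts ! s) (ts ! (s + 1)))))"

definition Omega :: "nat \<Rightarrow> (nat \<Rightarrow> nat \<Rightarrow> real) \<Rightarrow> (nat \<Rightarrow> real) \<Rightarrow> nat \<Rightarrow> nat \<Rightarrow> real" where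
  "Omega n A u i j = (if j > i then dcoef n A u i j else if j = i then 1 else 0)"

end

theory Submission
  imports Defs
begin

text \<open>Apply the matrices \<open>P\<^sub>i\<^sub>+\<^sub>1, \<dots>, P\<^sub>m\<close> to \<open>a\<^sub>i\<close> one at a time. After \<open>P\<^sub>l\<close> the iterate is
  \<open>\<Sum>\<^sub>j\<^sub>\<le>\<^sub>l \<omega>\<^sub>i\<^sub>j a\<^sub>j\<close>: the new coefficient produced by \<open>P\<^sub>l\<close> is \<open>-\<mu>\<^sub>l \<Sum>\<^sub>j\<^sub><\<^sub>l \<omega>\<^sub>i\<^sub>j h\<^sub>j\<^sub>,\<^sub>l\<close>, which is the
  recurrence characterising the entries of \<open>(I + F)\<^sup>-\<^sup>1\<close> for the strictly upper triangular
  \<open>F = (\<mu>\<^sub>l h\<^sub>j\<^sub>,\<^sub>l)\<close>. Expanding \<open>(I + F)\<^sup>-\<^sup>1 = \<Sum>\<^sub>p (-F)\<^sup>p\<close> entrywise gives the alternating sums over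
  increasing chains that define \<open>d\<^sub>i\<^sub>,\<^sub>j\<close>.\<close>

lemma sorted_wrt_less_nth_ge_add:
  assumes "sorted_wrt (<) (ts :: nat list)" "l < length ts"
  shows "ts ! 0 + l \<le> ts ! l"
  using assms(2)
proof (induction l)
  case 0
  then show ?case by simp
next
  case (Suc l)
  then have "ts ! l < ts ! Suc l" using assms(1) by (simp add: sorted_wrt_nth_less)
  with Suc show ?case by simp
qed

lemma incseqs_span:
  assumes "ts \<in> incseqs v i j" "v \<ge> 1"
  shows "i + (v - 1) \<le> j"
  using assms sorted_wrt_less_nth_ge_add[of ts "v - 1"] by (auto simp: incseqs_def)

lemma incseqs_set_subset:
  assumes "ts \<in> incseqs v i j"
  shows "set ts \<subseteq> {i..j}"
proof
  fix x assume "x \<in> set ts"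
  then obtain l where l: "l < length ts" "x = ts ! l" by (auto simp: in_set_conv_nth)
  have ts: "sorted_wrt (<) ts" "length ts = v" "ts ! 0 = i" "ts ! (v - 1) = j"
    using assms by (auto simp: incseqs_def)
  have "l = v - 1 \<or> l < v - 1" using ts l by linarith
  then have "ts ! l \<le> ts ! (v - 1)"
    using ts l sorted_wrt_nth_less[OF ts(1), of l "v - 1"] by auto
  then show "x \<in> {i..j}" using sorted_wrt_less_nth_ge_add[OF ts(1) l(1)] ts l by auto
qed

lemma finite_incseqs: "finite (incseqs v i j)"
proof (rule finite_subset)
  show "incseqs v i j \<subseteq> {ts. set ts \<subseteq> {i..j} \<and> length ts = v}"
    using incseqs_set_subset by (auto simp: incseqs_def)
qed (rule finite_lists_length_eq, simp)

lemma incseqs_one: "incseqs 1 i j = (if j = i then {[i]} else {})"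
  by (auto simp: incseqs_def length_Suc_conv)

lemma incseqs_Suc:
  assumes "v \<ge> 1"
  shows "incseqs (Suc v) i k = (\<lambda>ts. ts @ [k]) ` (\<Union>j<k. incseqs v i j)"
proof
  show "incseqs (Suc v) i k \<subseteq> (\<lambda>ts. ts @ [k]) ` (\<Union>j<k. incseqs v i j)"
  proof
    fix ts assume "ts \<in> incseqs (Suc v) i k"
    then have ts: "sorted_wrt (<) ts" "length ts = Suc v" "ts ! 0 = i" "ts ! v = k"
      by (auto simp: incseqs_def)
    then have snoc: "ts = butlast ts @ [k]"
      by (metis append_butlast_last_id diff_Suc_1 last_conv_nth list.size(3) nat.simps(3))
    have "ts ! (v - 1) < k" using ts assms sorted_wrt_nth_less[OF ts(1), of "v - 1" v] by simp
    moreover have "butlast ts \<in> incseqs v i (ts ! (v - 1))"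
      using ts assms sorted_wrt_append[of "(<)" "butlast ts" "[k]"] snoc
      by (auto simp: incseqs_def nth_butlast)
    ultimately show "ts \<in> (\<lambda>ts. ts @ [k]) ` (\<Union>j<k. incseqs v i j)"
      using snoc by blast
  qed
next
  show "(\<lambda>ts. ts @ [k]) ` (\<Union>j<k. incseqs v i j) \<subseteq> incseqs (Suc v) i k"
  proof
    fix x assume "x \<in> (\<lambda>ts. ts @ [k]) ` (\<Union>j<k. incseqs v i j)"
    then obtain ts j where x: "x = ts @ [k]" and "j < k" and ts: "ts \<in> incseqs v i j"
      by auto
    then have "\<forall>y\<in>set ts. y < k" using incseqs_set_subset by fastforce
    then show "x \<in> incseqs (Suc v) i k"
      using ts x assms by (auto simp: incseqs_def sorted_wrt_append nth_append)
  qed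
qed

definition path_sum :: "(nat \<Rightarrow> nat \<Rightarrow> 'a::comm_ring_1) \<Rightarrow> nat \<Rightarrow> nat \<Rightarrow> nat \<Rightarrow> 'a" where
  "path_sum f v i j = (\<Sum>ts \<in> incseqs v i j. \<Prod>s < v - 1. f (ts ! s) (ts ! (s + 1)))"

lemma path_sum_one: "path_sum f (Suc 0) i j = (if j = i then 1 else 0)"
  unfolding path_sum_def One_nat_def[symmetric] incseqs_one by simp

lemma path_sum_eq_0: "v \<ge> 1 \<Longrightarrow> j < i + (v - 1) \<Longrightarrow> path_sum f v i j = 0"
proof -
  assume "v \<ge> 1" "j < i + (v - 1)"
  then have "incseqs v i j = {}" using incseqs_span by fastforce
  then show ?thesis by (simp add: path_sum_def)
qed

lemma path_sum_Suc:
  assumes "v \<ge> 1"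
  shows "path_sum f (Suc v) i k = (\<Sum>j<k. path_sum f v i j * f j k)"
proof -
  let ?w = "\<lambda>v ts. \<Prod>s < v - 1. f (ts ! s) (ts ! (s + 1))"
  have "path_sum f (Suc v) i k = (\<Sum>ts \<in> (\<Union>j<k. incseqs v i j). ?w (Suc v) (ts @ [k]))"
    unfolding path_sum_def incseqs_Suc[OF assms] by (subst sum.reindex) (auto simp: inj_on_def)
  also have "\<dots> = (\<Sum>j<k. \<Sum>ts \<in> incseqs v i j. ?w (Suc v) (ts @ [k]))"
    by (rule sum.UNION_disjoint) (simp_all add: finite_incseqs, auto simp: incseqs_def)
  also have "\<dots> = (\<Sum>j<k. \<Sum>ts \<in> incseqs v i j. ?w v ts * f j k)"
  proof (intro sum.cong refl)
    fix j ts assume "ts \<in> incseqs v i j"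
    then have "length ts = v" "ts ! (v - 1) = j" by (auto simp: incseqs_def)
    moreover obtain v' where "v = Suc v'" using assms by (cases v) auto
    ultimately show "?w (Suc v) (ts @ [k]) = ?w v ts * f j k"
      by (simp add: nth_append)
  qed
  also have "\<dots> = (\<Sum>j<k. path_sum f v i j * f j k)"
    by (simp add: path_sum_def sum_distrib_right)
  finally show ?thesis .
qed

text \<open>Entry \<open>(i, j)\<close> of \<open>(I + F)\<^sup>-\<^sup>1 = \<Sum>\<^sub>p (-F)\<^sup>p\<close> for the strictly upper triangular \<open>F = (f j k)\<^sub>j\<^sub><\<^sub>k\<close>:
  a chain with \<open>v\<close> vertices contributes to \<open>(-F)\<^sup>v\<^sup>-\<^sup>1\<close>.\<close>

definition neumann_entry :: "(nat \<Rightarrow> nat \<Rightarrow> 'a::comm_ring_1) \<Rightarrow> nat \<Rightarrow> nat \<Rightarrow> 'a" where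
  "neumann_entry f i j = (\<Sum>v = 1..j - i + 1. (-1) ^ (v - 1) * path_sum f v i j)"

lemma neumann_entry_split_first:
  "neumann_entry f i j = path_sum f 1 i j + (\<Sum>v = 2..j - i + 1. (-1) ^ (v - 1) * path_sum f v i j)"
  unfolding neumann_entry_def sum.atLeast_Suc_atMost[of 1 "j - i + 1", OF le_add2] Suc_1 by simp

lemma neumann_entry_eq_alternating_sum:
  assumes "j - i < N"
  shows "(\<Sum>v = 1..N. (-1) ^ v * path_sum f v i j) = - neumann_entry f i j"
proof -
  have "(\<Sum>v = 1..N. (-1) ^ v * path_sum f v i j) = (\<Sum>v = 1..j - i + 1. (-1) ^ v * path_sum f v i j)"
    using assms path_sum_eq_0[of _ j i f] by (intro sum.mono_neutral_right) auto
  also have "\<dots> = (\<Sum>v = 1..j - i + 1. - ((-1) ^ (v - 1) * path_sum f v i j))"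
    by (intro sum.cong refl) (auto simp: power_eq_if)
  finally show ?thesis by (simp add: neumann_entry_def sum_negf)
qed

lemma neumann_entry_rec:
  assumes "i < k"
  shows "neumann_entry f i k = - (\<Sum>j<k. neumann_entry f i j * f j k)"
proof -
  have "neumann_entry f i k = (\<Sum>v = 1..k - i. (-1) ^ v * path_sum f (Suc v) i k)"
    using assms sum.shift_bounds_cl_Suc_ivl[of "\<lambda>v. (-1) ^ (v - 1) * path_sum f v i k" 1 "k - i"]
    by (simp add: neumann_entry_split_first path_sum_one numeral_2_eq_2)
  also have "\<dots> = (\<Sum>v = 1..k - i. \<Sum>j<k. (-1) ^ v * path_sum f v i j * f j k)"
    by (simp add: path_sum_Suc sum_distrib_left mult.assoc)
  also have "\<dots> = (\<Sum>j<k. (\<Sum>v = 1..k - i. (-1) ^ v * path_sum f v i j) * f j k)"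
    unfolding sum_distrib_right by (rule sum.swap)
  also have "\<dots> = (\<Sum>j<k. - neumann_entry f i j * f j k)"
  proof (intro sum.cong refl)
    fix j assume "j \<in> {..<k}"
    then have "j - i < k - i" using assms by auto
    from neumann_entry_eq_alternating_sum[OF this, of f]
    show "(\<Sum>v = 1..k - i. (-1) ^ v * path_sum f v i j) * f j k = - neumann_entry f i j * f j k"
      by simp
  qed
  finally show ?thesis by (simp add: sum_negf)
qed

lemma dcoef_eq_path_sums:
  "dcoef n A u i j = (\<Sum>v = 2..j - i + 1. (-1) ^ (v - 1) * path_sum (\<lambda>j k. u k * hcoef n A j k) v i j)"
  by (simp add: dcoef_def path_sum_def prod.distrib)

lemma Omega_eq_neumann_entry:
  "Omega n A u i j = neumann_entry (\<lambda>j k. u k * hcoef n A j k) i j"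
  by (simp add: Omega_def dcoef_eq_path_sums neumann_entry_split_first path_sum_one)

lemma Omega_rec:
  assumes "i < k"
  shows "Omega n A u i k = - u k * (\<Sum>j<k. Omega n A u i j * hcoef n A j k)"
  unfolding Omega_eq_neumann_entry neumann_entry_rec[OF assms]
  by (simp add: sum_distrib_left sum_negf mult_ac)

definition mvec :: "nat \<Rightarrow> (nat \<Rightarrow> nat \<Rightarrow> real) \<Rightarrow> (nat \<Rightarrow> real) \<Rightarrow> nat \<Rightarrow> real" where
  "mvec n X x r = (\<Sum>c = 1..n. X r c * x c)"

lemma mvec_cong: "(\<And>c. c \<in> {1..n} \<Longrightarrow> x c = y c) \<Longrightarrow> mvec n X x = mvec n X y"
  unfolding mvec_def by (intro ext sum.cong) auto

lemma mvec_idm: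
  assumes "r \<in> {1..n}"
  shows "mvec n idm x r = x r"
proof -
  have "mvec n idm x r = (\<Sum>c\<in>{1..n}. if r = c then x c else 0)"
    unfolding mvec_def idm_def by (intro sum.cong) auto
  then show ?thesis using assms by simp
qed

lemma mvec_mmul: "mvec n (mmul n X Y) x = mvec n X (mvec n Y x)"
  unfolding mvec_def mmul_def
  by (auto simp: sum_distrib_left sum_distrib_right mult_ac intro: sum.swap)

lemma mvec_Pmat:
  assumes "r \<in> {1..n}"
  shows "mvec n (Pmat n A k \<mu>) x r = x r - \<mu> * A k r * (\<Sum>c = 1..n. A k c * x c) / rownorm2 n A k"
proof -
  have "mvec n (Pmat n A k \<mu>) x r
      = mvec n idm x r - (\<Sum>c = 1..n. \<mu> * A k r * A k c / rownorm2 n A k * x c)"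
    unfolding mvec_def Pmat_def by (simp add: sum_subtractf left_diff_distrib)
  then show ?thesis
    using mvec_idm[OF assms] by (simp add: sum_distrib_left sum_divide_distrib mult_ac)
qed

lemma mvec_Qaux_diff_Suc:
  assumes "l < m"
  shows "mvec n (Qaux m n A u (m - l)) x
       = mvec n (Qaux m n A u (m - Suc l)) (mvec n (Pmat n A (Suc l) (u (Suc l))) x)"
proof -
  have "m - l = Suc (m - Suc l)" "m - (m - Suc l) = Suc l" using assms by auto
  then show ?thesis by (simp add: mvec_mmul)
qed

text \<open>The row combination \<open>\<Sum>\<^sub>j\<^sub>\<le>\<^sub>l \<omega>\<^sub>i\<^sub>j a\<^sub>j\<close>: the image of \<open>a\<^sub>i\<close> under \<open>P\<^sub>l \<cdots> P\<^sub>i\<^sub>+\<^sub>1\<close>.\<close>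

definition omega_prefix_comb :: "nat \<Rightarrow> (nat \<Rightarrow> nat \<Rightarrow> real) \<Rightarrow> (nat \<Rightarrow> real) \<Rightarrow> nat \<Rightarrow> nat \<Rightarrow> nat \<Rightarrow> real" where
  "omega_prefix_comb n A u i l c = (\<Sum>j\<le>l. Omega n A u i j * A j c)"

lemma omega_prefix_comb_self: "omega_prefix_comb n A u i i = A i"
proof
  fix c
  have "omega_prefix_comb n A u i i c = (\<Sum>j\<le>i. if j = i then A i c else 0)"
    unfolding omega_prefix_comb_def by (intro sum.cong) (auto simp: Omega_def)
  then show "omega_prefix_comb n A u i i c = A i c" by simp
qed

lemma omega_prefix_comb_eq_mmul:
  assumes "1 \<le> i"
  shows "omega_prefix_comb n A u i m r = mmul m (Omega n A u) A i r"
  unfolding omega_prefix_comb_def mmul_def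
  using assms by (intro sum.mono_neutral_right) (auto simp: Omega_def)

lemma mvec_Pmat_omega_prefix_comb:
  assumes "i \<le> l" "r \<in> {1..n}"
  shows "mvec n (Pmat n A (Suc l) (u (Suc l))) (omega_prefix_comb n A u i l) r
       = omega_prefix_comb n A u i (Suc l) r"
proof -
  let ?k = "Suc l"
  have "(\<Sum>c = 1..n. A ?k c * omega_prefix_comb n A u i l c)
      = (\<Sum>j\<le>l. Omega n A u i j * (\<Sum>c = 1..n. A j c * A ?k c))"
    unfolding omega_prefix_comb_def
    by (simp add: sum_distrib_left sum.swap[of _ "{..l}"] mult_ac)
  then have "(\<Sum>c = 1..n. A ?k c * omega_prefix_comb n A u i l c) / rownorm2 n A ?k
      = (\<Sum>j\<le>l. Omega n A u i j * hcoef n A j ?k)"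
    by (simp add: hcoef_def sum_divide_distrib sum_distrib_left)
  then have "mvec n (Pmat n A ?k (u ?k)) (omega_prefix_comb n A u i l) r
      = omega_prefix_comb n A u i l r + Omega n A u i ?k * A ?k r"
    using assms Omega_rec[of i ?k n A u]
    by (simp add: mvec_Pmat lessThan_Suc_atMost times_divide_eq_right[symmetric])
  then show ?thesis by (simp add: omega_prefix_comb_def)
qed

lemma mvec_Qaux_row:
  assumes "i \<le> l" "l \<le> m"
  shows "mvec n (Qaux m n A u (m - i)) (A i)
       = mvec n (Qaux m n A u (m - l)) (omega_prefix_comb n A u i l)"
  using assms
proof (induction l rule: dec_induct)
  case base
  then show ?case by (simp add: omega_prefix_comb_self)
next
  case (step l)
  have "mvec n (Qaux m n A u (m - Suc l))
          (mvec n (Pmat n A (Suc l) (u (Suc l))) (omega_prefix_comb n A u i l))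
      = mvec n (Qaux m n A u (m - Suc l)) (omega_prefix_comb n A u i (Suc l))"
    by (rule mvec_cong) (use step.hyps mvec_Pmat_omega_prefix_comb in auto)
  with step show ?case by (simp add: mvec_Qaux_diff_Suc)
qed

theorem theorem3p8:
  fixes m n :: nat and A :: "nat \<Rightarrow> nat \<Rightarrow> real" and u :: "nat \<Rightarrow> real"
  assumes nozero: "\<forall>k \<in> {1..m}. \<exists>c \<in> {1..n}. A k c \<noteq> 0"
  shows "\<forall>i \<in> {1..m}. \<forall>r \<in> {1..n}. AS m n A u i r = mmul m (Omega n A u) A i r"
proof (intro ballI)
  fix i r assume i: "i \<in> {1..m}" and r: "r \<in> {1..n}"
  have "AS m n A u i r = mvec n (Qaux m n A u (m - i)) (A i) r"
    by (simp add: AS_def Qmat_def mvec_def)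
  also have "\<dots> = mvec n idm (omega_prefix_comb n A u i m) r"
    using i mvec_Qaux_row[of i m m] by simp
  also have "\<dots> = mmul m (Omega n A u) A i r"
    using i r by (simp add: mvec_idm omega_prefix_comb_eq_mmul)
  finally show "AS m n A u i r = mmul m (Omega n A u) A i r" .
qed

end
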